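(* Let $I\neq\emptyset$ be any index set. Suppose that $Q$ is a non-empty subset of $l_\infty(I)$ given by an arbitrary system of inequalities, each of the form $\sigma x_i\le C$ or $\sigma x_i+\tau x_j\le C$ with $i,j\in I$, $|\sigma|=|\tau|=1$ and $C\in\mathbb{R}$. Then $Q$, with the metric induced by the sup norm, is injective.
   Context: $l_\infty(I)$ is the Banach space of bounded real families $(x_i)_{i\in I}$ with the sup norm. A metric space $Y$ is injective if for every metric space $B$, every $A\subset B$ and every 1-Lipschitz $f\colon A\to Y$ there is a 1-Lipschitz extension $B\to Y$. *)

theory Defs
  imports "HOL-Analysis.Analysis"
begin

text \<open>The index set I is represented by the (arbitrary, nonempty) type 'i.
  l_infinity(I) = bounded real families indexed by 'i, with the sup-norm distance.\<close>

definition linf :: "('i \<Rightarrow> real) set" where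
  "linf = {x. bounded (range x)}"

definition linf_dist :: "('i \<Rightarrow> real) \<Rightarrow> ('i \<Rightarrow> real) \<Rightarrow> real" where
  "linf_dist x y = (SUP i. \<bar>x i - y i\<bar>)"

definition ineq_system_set ::
  "('i \<times> real \<times> real) set \<Rightarrow> ('i \<times> 'i \<times> real \<times> real \<times> real) set \<Rightarrow> ('i \<Rightarrow> real) set" where
  "ineq_system_set S1 S2 =
     {x \<in> linf. (\<forall>(i, \<sigma>, C) \<in> S1. \<sigma> * x i \<le> C) \<and>
                 (\<forall>(i, j, \<sigma>, \<tau>, C) \<in> S2. \<sigma> * x i + \<tau> * x j \<le> C)}"

text \<open>Injectivity of the metric space (Y, dY), tested against all metric spaces
  (B, dB) whose points live in the type 'b: every 1-Lipschitz map from a subset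
  A of B into Y extends to a 1-Lipschitz map B \<rightarrow> Y.\<close>

definition injective_wrt :: "'b set \<Rightarrow> ('b \<Rightarrow> 'b \<Rightarrow> real) \<Rightarrow> 'y set \<Rightarrow> ('y \<Rightarrow> 'y \<Rightarrow> real) \<Rightarrow> bool" where
  "injective_wrt B dB Y dY \<longleftrightarrow>
     (\<forall>A f. A \<subseteq> B \<and> f \<in> A \<rightarrow> Y \<and> (\<forall>a\<in>A. \<forall>a'\<in>A. dY (f a) (f a') \<le> dB a a') \<longrightarrow>
        (\<exists>g. g \<in> B \<rightarrow> Y \<and> (\<forall>a\<in>A. g a = f a) \<and> (\<forall>b\<in>B. \<forall>b'\<in>B. dY (g b) (g b') \<le> dB b b')))"

end

theory Submission
  imports Defs
begin

text \<open>Replace each coordinate \<open>x\<^sub>i\<close> by the pair of signed coordinates \<open>x\<^sub>i\<close> and \<open>-x\<^sub>i\<close>.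
  Every inequality with unit coefficients becomes a difference constraint \<open>z p - z q \<le> C\<close>
  between signed coordinates: \<open>\<sigma>x\<^sub>i \<le> C\<close> reads \<open>(\<sigma>x\<^sub>i) - (-\<sigma>x\<^sub>i) \<le> 2C\<close>, and
  \<open>\<sigma>x\<^sub>i + \<tau>x\<^sub>j \<le> C\<close> reads \<open>(\<sigma>x\<^sub>i) - (-\<tau>x\<^sub>j) \<le> C\<close> as well as \<open>(\<tau>x\<^sub>j) - (-\<sigma>x\<^sub>i) \<le> C\<close>.
  A McShane-type infimum extends a 1-Lipschitz map coordinatewise while preserving all
  difference constraints valid on \<open>Q\<close>; averaging the two signed coordinates of the
  extension then gives a 1-Lipschitz extension with values in \<open>Q\<close>.\<close>

lemma linf_if_close: "(\<And>i. \<bar>x i - y i\<bar> \<le> r) \<Longrightarrow> y \<in> linf \<Longrightarrow> x \<in> linf"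
proof -
  assume close: "\<And>i. \<bar>x i - y i\<bar> \<le> r" and "y \<in> linf"
  then obtain M where M: "\<forall>i. \<bar>y i\<bar> \<le> M" unfolding linf_def by (auto simp: bounded_iff)
  have "\<bar>x i\<bar> \<le> M + r" for i using M[rule_format, of i] close[of i] by linarith
  then show ?thesis unfolding linf_def bounded_iff by auto
qed

lemma linf_dist_le_iff:
  assumes "x \<in> linf" "y \<in> linf"
  shows "linf_dist x y \<le> r \<longleftrightarrow> (\<forall>i. \<bar>x i - y i\<bar> \<le> r)"
proof
  obtain Mx My where Mx: "\<forall>i. \<bar>x i\<bar> \<le> Mx" and My: "\<forall>i. \<bar>y i\<bar> \<le> My"
    using assms unfolding linf_def by (auto simp: bounded_iff)
  have "\<bar>x i - y i\<bar> \<le> Mx + My" for i using Mx[rule_format, of i] My[rule_format, of i] by linarith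
  then have "bdd_above (range (\<lambda>i. \<bar>x i - y i\<bar>))" by (intro bdd_aboveI2)
  moreover assume "linf_dist x y \<le> r"
  ultimately show "\<forall>i. \<bar>x i - y i\<bar> \<le> r"
    unfolding linf_dist_def by (meson UNIV_I cSUP_upper order_trans)
next
  assume "\<forall>i. \<bar>x i - y i\<bar> \<le> r"
  then show "linf_dist x y \<le> r" unfolding linf_dist_def by (auto intro: cSUP_least)
qed

lemma cInf_le_cInf_add:
  fixes T T' :: "real set"
  assumes "T' \<noteq> {}" "bdd_below T" "\<And>t. t \<in> T' \<Longrightarrow> \<exists>s\<in>T. s \<le> t + c"
  shows "Inf T \<le> Inf T' + c"
proof -
  have "Inf T - c \<le> t" if "t \<in> T'" for t
    using assms(3)[OF that] cInf_lower[OF _ assms(2)] by force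
  then have "Inf T - c \<le> Inf T'" using assms(1) by (intro cInf_greatest)
  then show ?thesis by simp
qed

locale difference_constrained_extension = Metric_space B dB
  for B :: "'b set" and dB +
  fixes A :: "'b set" and Z :: "('p \<Rightarrow> real) set" and h :: "'b \<Rightarrow> 'p \<Rightarrow> real"
  assumes A_subset: "A \<subseteq> B" and A_nonempty: "A \<noteq> {}"
    and h_in: "\<And>a. a \<in> A \<Longrightarrow> h a \<in> Z"
    and h_lipschitz: "\<And>a a' p. a \<in> A \<Longrightarrow> a' \<in> A \<Longrightarrow> \<bar>h a p - h a' p\<bar> \<le> dB a a'"
begin

text \<open>With \<open>q = p\<close> and \<open>C = 0\<close> these are McShane's upper bounds \<open>h a p + dB a b\<close>; allowing a
  detour through any \<open>q\<close> along a constraint valid on \<open>Z\<close> makes the infimum respect that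
  constraint.\<close>

definition candidates :: "'b \<Rightarrow> 'p \<Rightarrow> real set" where
  "candidates b p = {h a q + dB a b + C | a q C. a \<in> A \<and> (\<forall>z\<in>Z. z p - z q \<le> C)}"

definition extension :: "'b \<Rightarrow> 'p \<Rightarrow> real" where
  "extension b p = Inf (candidates b p)"

lemma candidates_lower_bound:
  assumes "b \<in> B" "a \<in> A" "t \<in> candidates b p"
  shows "h a p - dB a b \<le> t"
proof -
  obtain a' q C where t: "t = h a' q + dB a' b + C" and a': "a' \<in> A"
    and C: "\<forall>z\<in>Z. z p - z q \<le> C"
    using assms(3) unfolding candidates_def by blast
  have "h a' p - h a' q \<le> C" using C h_in[OF a'] by blast
  moreover have "h a p \<le> h a' p + dB a a'" using h_lipschitz[OF assms(2) a', of p] by linarith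
  moreover have "dB a a' \<le> dB a b + dB a' b"
    using triangle[of a b a'] commute[of b a'] A_subset assms(1,2) a' by auto
  ultimately show ?thesis using t by linarith
qed

lemma self_candidate: "a \<in> A \<Longrightarrow> h a p + dB a b \<in> candidates b p"
  unfolding candidates_def by (intro CollectI exI[of _ a] exI[of _ p] exI[of _ 0]) auto

lemma bdd_below_candidates: "b \<in> B \<Longrightarrow> bdd_below (candidates b p)"
proof -
  assume "b \<in> B"
  obtain a where "a \<in> A" using A_nonempty by blast
  then show ?thesis using candidates_lower_bound[OF \<open>b \<in> B\<close>] by (intro bdd_belowI)
qed

lemma extension_bounds:
  assumes "b \<in> B" "a \<in> A"
  shows "h a p - dB a b \<le> extension b p" "extension b p \<le> h a p + dB a b"
proof -
  show "h a p - dB a b \<le> extension b p"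
    unfolding extension_def using assms self_candidate candidates_lower_bound
    by (blast intro: cInf_greatest)
  show "extension b p \<le> h a p + dB a b"
    unfolding extension_def using assms by (simp add: cInf_lower self_candidate bdd_below_candidates)
qed

lemma extension_restrict: "a \<in> A \<Longrightarrow> extension a = h a"
proof
  fix p assume "a \<in> A"
  then have "a \<in> B" "dB a a = 0" using A_subset by auto
  then show "extension a p = h a p"
    using extension_bounds[OF _ \<open>a \<in> A\<close>, of a p] by simp
qed

lemma extension_lipschitz:
  assumes "b \<in> B" "b' \<in> B"
  shows "\<bar>extension b p - extension b' p\<bar> \<le> dB b b'"
proof -
  have "extension b p \<le> extension b' p + dB b b'" if "b \<in> B" "b' \<in> B" for b b'
    unfolding extension_def
  proof (rule cInf_le_cInf_add)
    show "candidates b' p \<noteq> {}" using self_candidate A_nonempty by blast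
    show "bdd_below (candidates b p)" using bdd_below_candidates \<open>b \<in> B\<close> .
    fix t assume "t \<in> candidates b' p"
    then obtain a q C where t: "t = h a q + dB a b' + C" and a: "a \<in> A"
      and C: "\<forall>z\<in>Z. z p - z q \<le> C"
      unfolding candidates_def by blast
    have mem: "h a q + dB a b + C \<in> candidates b p" unfolding candidates_def using a C by blast
    have "dB a b \<le> dB a b' + dB b b'"
      using triangle[of a b' b] commute[of b b'] A_subset a that by auto
    then show "\<exists>s\<in>candidates b p. s \<le> t + dB b b'" using t by (intro bexI[OF _ mem]) linarith
  qed
  from this[OF assms] this[OF assms(2,1)] show ?thesis using commute[of b' b] by linarith
qed

lemma extension_difference_constraint:
  assumes "b \<in> B" "\<forall>z\<in>Z. z p - z q \<le> C"
  shows "extension b p - extension b q \<le> C"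
proof -
  have "extension b p \<le> extension b q + C"
    unfolding extension_def
  proof (rule cInf_le_cInf_add)
    show "candidates b q \<noteq> {}" using self_candidate A_nonempty by blast
    show "bdd_below (candidates b p)" using bdd_below_candidates assms(1) .
    fix t assume "t \<in> candidates b q"
    then obtain a q' C' where t: "t = h a q' + dB a b + C'" and a: "a \<in> A"
      and C': "\<forall>z\<in>Z. z q - z q' \<le> C'"
      unfolding candidates_def by blast
    have "\<forall>z\<in>Z. z p - z q' \<le> C' + C" using C' assms(2) by fastforce
    then have "h a q' + dB a b + (C' + C) \<in> candidates b p" unfolding candidates_def using a by blast
    then show "\<exists>s\<in>candidates b p. s \<le> t + C" using t by (intro bexI) auto
  qed
  then show ?thesis by simp
qed

end

definition signed_coords :: "('i \<Rightarrow> real) \<Rightarrow> 'i \<times> bool \<Rightarrow> real" where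
  "signed_coords x = (\<lambda>(i, s). if s then x i else - x i)"

definition from_signed_coords :: "('i \<times> bool \<Rightarrow> real) \<Rightarrow> 'i \<Rightarrow> real" where
  "from_signed_coords u i = (u (i, True) - u (i, False)) / 2"

lemma from_signed_coords_signed_coords [simp]: "from_signed_coords (signed_coords x) = x"
  unfolding from_signed_coords_def signed_coords_def by simp

lemma abs_signed_coords_diff: "\<bar>signed_coords x p - signed_coords y p\<bar> = \<bar>x (fst p) - y (fst p)\<bar>"
  unfolding signed_coords_def by (cases p) auto

lemma abs_from_signed_coords_diff_le:
  "(\<And>p. \<bar>u p - v p\<bar> \<le> r) \<Longrightarrow> \<bar>from_signed_coords u i - from_signed_coords v i\<bar> \<le> r"
proof -
  assume "\<And>p. \<bar>u p - v p\<bar> \<le> r"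
  from this[of "(i, True)"] this[of "(i, False)"] show ?thesis
    unfolding from_signed_coords_def by (simp add: abs_le_iff field_simps)
qed

lemma unit_mult_eq_signed_coords:
  assumes "\<bar>\<sigma>\<bar> = 1"
  shows "\<sigma> * x i = signed_coords x (i, \<sigma> = 1)" "- (\<sigma> * x i) = signed_coords x (i, \<sigma> \<noteq> 1)"
  using assms unfolding signed_coords_def by (auto simp: abs_if split: if_splits)

lemma unit_mult_from_signed_coords:
  assumes "\<bar>\<sigma>\<bar> = 1"
  shows "\<sigma> * from_signed_coords u i = (u (i, \<sigma> = 1) - u (i, \<sigma> \<noteq> 1)) / 2"
  using assms unfolding from_signed_coords_def by (auto simp: abs_if split: if_splits)

lemma from_signed_coords_in_ineq_system_set:
  assumes S1: "\<forall>(i, \<sigma>, C) \<in> S1. \<bar>\<sigma>\<bar> = 1"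
    and S2: "\<forall>(i, j, \<sigma>, \<tau>, C) \<in> S2. \<bar>\<sigma>\<bar> = 1 \<and> \<bar>\<tau>\<bar> = 1"
    and bounded: "from_signed_coords u \<in> linf"
    and constraints: "\<And>p q C. \<forall>y \<in> ineq_system_set S1 S2. signed_coords y p - signed_coords y q \<le> C
      \<Longrightarrow> u p - u q \<le> C"
  shows "from_signed_coords u \<in> ineq_system_set S1 S2"
proof -
  let ?Q = "ineq_system_set S1 S2"
  have "\<sigma> * from_signed_coords u i \<le> C" if "(i, \<sigma>, C) \<in> S1" for i \<sigma> C
  proof -
    have \<sigma>: "\<bar>\<sigma>\<bar> = 1" using S1 that by auto
    have "\<forall>y \<in> ?Q. \<sigma> * y i \<le> C" using that unfolding ineq_system_set_def by auto
    then have "u (i, \<sigma> = 1) - u (i, \<sigma> \<noteq> 1) \<le> 2 * C"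
      by (intro constraints) (simp add: unit_mult_eq_signed_coords[OF \<sigma>, symmetric])
    then show ?thesis using unit_mult_from_signed_coords[OF \<sigma>, of u i] by argo
  qed
  moreover have "\<sigma> * from_signed_coords u i + \<tau> * from_signed_coords u j \<le> C"
    if "(i, j, \<sigma>, \<tau>, C) \<in> S2" for i j \<sigma> \<tau> C
  proof -
    have \<sigma>: "\<bar>\<sigma>\<bar> = 1" and \<tau>: "\<bar>\<tau>\<bar> = 1" using S2 that by auto
    have "\<forall>y \<in> ?Q. \<sigma> * y i + \<tau> * y j \<le> C" using that unfolding ineq_system_set_def by auto
    then have "u (i, \<sigma> = 1) - u (j, \<tau> \<noteq> 1) \<le> C" "u (j, \<tau> = 1) - u (i, \<sigma> \<noteq> 1) \<le> C"
      by (intro constraints; simp add: unit_mult_eq_signed_coords[OF \<sigma>, symmetric]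
          unit_mult_eq_signed_coords[OF \<tau>, symmetric] add.commute)+
    then show ?thesis
      using unit_mult_from_signed_coords[OF \<sigma>, of u i] unit_mult_from_signed_coords[OF \<tau>, of u j]
      by argo
  qed
  ultimately show ?thesis using bounded unfolding ineq_system_set_def by auto
qed

lemma ineq_system_set_lipschitz_extension:
  assumes S1: "\<forall>(i, \<sigma>, C) \<in> S1. \<bar>\<sigma>\<bar> = 1"
    and S2: "\<forall>(i, j, \<sigma>, \<tau>, C) \<in> S2. \<bar>\<sigma>\<bar> = 1 \<and> \<bar>\<tau>\<bar> = 1"
    and "Metric_space B dB" "A \<subseteq> B" "A \<noteq> {}"
    and f: "f \<in> A \<rightarrow> ineq_system_set S1 S2"
    and f_lipschitz: "\<And>a a' i. a \<in> A \<Longrightarrow> a' \<in> A \<Longrightarrow> \<bar>f a i - f a' i\<bar> \<le> dB a a'"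
  obtains g where "g \<in> B \<rightarrow> ineq_system_set S1 S2" "\<And>a. a \<in> A \<Longrightarrow> g a = f a"
    "\<And>b b' i. b \<in> B \<Longrightarrow> b' \<in> B \<Longrightarrow> \<bar>g b i - g b' i\<bar> \<le> dB b b'"
proof -
  let ?Q = "ineq_system_set S1 S2"
  interpret E: difference_constrained_extension B dB A "signed_coords ` ?Q" "\<lambda>a. signed_coords (f a)"
    using assms
    by (intro difference_constrained_extension.intro difference_constrained_extension_axioms.intro)
      (auto simp: abs_signed_coords_diff)
  define g where "g b = from_signed_coords (E.extension b)" for b
  obtain a0 where a0: "a0 \<in> A" using \<open>A \<noteq> {}\<close> by blast
  have "g b \<in> ?Q" if b: "b \<in> B" for b
    unfolding g_def
  proof (rule from_signed_coords_in_ineq_system_set[OF S1 S2])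
    have "\<bar>E.extension b p - signed_coords (f a0) p\<bar> \<le> dB a0 b" for p
      using E.extension_bounds[OF b a0, of p] by linarith
    then have "\<bar>g b i - f a0 i\<bar> \<le> dB a0 b" for i
      using abs_from_signed_coords_diff_le unfolding g_def by (metis from_signed_coords_signed_coords)
    moreover have "f a0 \<in> linf" using f a0 unfolding ineq_system_set_def by auto
    ultimately show "from_signed_coords (E.extension b) \<in> linf"
      using linf_if_close unfolding g_def by blast
    show "E.extension b p - E.extension b q \<le> C"
      if "\<forall>y \<in> ?Q. signed_coords y p - signed_coords y q \<le> C" for p q C
      using that by (intro E.extension_difference_constraint[OF b]) auto
  qed
  moreover have "g a = f a" if "a \<in> A" for a
    unfolding g_def using E.extension_restrict[OF that] by simp
  moreover have "\<bar>g b i - g b' i\<bar> \<le> dB b b'" if "b \<in> B" "b' \<in> B" for b b' i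
    unfolding g_def using E.extension_lipschitz[OF that] by (rule abs_from_signed_coords_diff_le)
  ultimately show thesis using that by blast
qed

theorem proposition2p4:
  fixes S1 :: "('i \<times> real \<times> real) set"
    and S2 :: "('i \<times> 'i \<times> real \<times> real \<times> real) set"
    and B :: "'b set" and dB :: "'b \<Rightarrow> 'b \<Rightarrow> real"
  assumes "\<forall>(i, \<sigma>, C) \<in> S1. \<bar>\<sigma>\<bar> = 1"
    and "\<forall>(i, j, \<sigma>, \<tau>, C) \<in> S2. \<bar>\<sigma>\<bar> = 1 \<and> \<bar>\<tau>\<bar> = 1"
    and "ineq_system_set S1 S2 \<noteq> {}"
    and "Metric_space B dB"
  shows "injective_wrt B dB (ineq_system_set S1 S2) linf_dist"
  unfolding injective_wrt_def
proof (intro allI impI)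
  let ?Q = "ineq_system_set S1 S2"
  have Q_linf: "?Q \<subseteq> linf" unfolding ineq_system_set_def by auto
  fix A f
  assume "A \<subseteq> B \<and> f \<in> A \<rightarrow> ?Q \<and> (\<forall>a\<in>A. \<forall>a'\<in>A. linf_dist (f a) (f a') \<le> dB a a')"
  then have A: "A \<subseteq> B" and f: "f \<in> A \<rightarrow> ?Q"
    and f_dist: "\<forall>a\<in>A. \<forall>a'\<in>A. linf_dist (f a) (f a') \<le> dB a a'" by auto
  have f_lipschitz: "\<bar>f a i - f a' i\<bar> \<le> dB a a'" if "a \<in> A" "a' \<in> A" for a a' i
    using f_dist that f Q_linf linf_dist_le_iff[of "f a" "f a'"] by blast
  show "\<exists>g. g \<in> B \<rightarrow> ?Q \<and> (\<forall>a\<in>A. g a = f a) \<and> (\<forall>b\<in>B. \<forall>b'\<in>B. linf_dist (g b) (g b') \<le> dB b b')"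
  proof (cases "A = {}")
    case True
    obtain y where y: "y \<in> ?Q" using assms(3) by blast
    have "linf_dist y y \<le> dB b b'" if "b \<in> B" "b' \<in> B" for b b'
      using y Q_linf Metric_space.nonneg[OF assms(4)] linf_dist_le_iff by fastforce
    then show ?thesis using True y by (intro exI[of _ "\<lambda>_. y"]) auto
  next
    case False
    obtain g where g: "g \<in> B \<rightarrow> ?Q" and "\<And>a. a \<in> A \<Longrightarrow> g a = f a"
      and g_lipschitz: "\<And>b b' i. b \<in> B \<Longrightarrow> b' \<in> B \<Longrightarrow> \<bar>g b i - g b' i\<bar> \<le> dB b b'"
      using ineq_system_set_lipschitz_extension[OF assms(1,2,4) A False f f_lipschitz] by blast
    moreover have "linf_dist (g b) (g b') \<le> dB b b'" if "b \<in> B" "b' \<in> B" for b b'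
      using g g_lipschitz[OF that] that Q_linf linf_dist_le_iff[of "g b" "g b'"] by blast
    ultimately show ?thesis by blast
  qed
qed

end
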